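(* Let $n\ge 3$ and $\mathbf d\in\mathbb R_A^{\binom n2}$. Suppose $A_1$ is the unique Condorcet winner and $A_n$ the unique Condorcet loser of $\mathbf d$. Let $\mathbf d_{st}$ be the orthogonal projection of $\mathbf d$ onto $\mathbb{ST}_A^n$. Then $A_1$ is strictly ranked above $A_n$ in $\mathbf d_{st}$, i.e., the $(1,n)$ entry of $\mathbf d_{st}$ is strictly positive.
   Context: $\mathbb R_A^{\binom n2}$ denotes the space of vectors $\mathbf d=(d_{1,2},\dots,d_{1,n};d_{2,3},\dots;d_{n-1,n})$ indexed by pairs $i<j$ of $\{1,\dots,n\}$, with convention $d_{j,i}=-d_{i,j}$, carrying the standard Euclidean inner product. The entry $d_{i,j}$ compares alternatives $A_i,A_j$: $A_i$ is ranked above $A_j$ iff $d_{i,j}>0$. $A_j$ is a Condorcet winner of $\mathbf d$ if $d_{j,k}>0$ for all $k\ne j$, and a Condorcet loser if $d_{j,k}<0$ for all $k\neq j$. A vector is strongly transitive if $d_{i,j}+d_{j,k}=d_{i,k}$ for all triples $i,j,k$; $\mathbb{ST}_A^n$ is the linear subspace of strongly transitive vectors. *)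

theory Defs
  imports Main "HOL-Analysis.Analysis"
begin

text \<open>A vector d in R_A^(n choose 2) is represented as a function d :: nat => nat => real
  on index pairs of {1..n}; only the entries d i j with i < j are coordinates, and the
  convention d j i = - d i j is imposed by the predicate pair_vec.\<close>

definition pair_vec :: "nat \<Rightarrow> (nat \<Rightarrow> nat \<Rightarrow> real) \<Rightarrow> bool" where
  "pair_vec n d \<longleftrightarrow> (\<forall>i\<in>{1..n}. \<forall>j\<in>{1..n}. d j i = - d i j)"

definition pair_inner :: "nat \<Rightarrow> (nat \<Rightarrow> nat \<Rightarrow> real) \<Rightarrow> (nat \<Rightarrow> nat \<Rightarrow> real) \<Rightarrow> real" where
  "pair_inner n d e = (\<Sum>i\<in>{1..n}. \<Sum>j\<in>{i<..n}. d i j * e i j)"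

definition condorcet_winner :: "nat \<Rightarrow> (nat \<Rightarrow> nat \<Rightarrow> real) \<Rightarrow> nat \<Rightarrow> bool" where
  "condorcet_winner n d j \<longleftrightarrow> j \<in> {1..n} \<and> (\<forall>k\<in>{1..n}. k \<noteq> j \<longrightarrow> d j k > 0)"

definition condorcet_loser :: "nat \<Rightarrow> (nat \<Rightarrow> nat \<Rightarrow> real) \<Rightarrow> nat \<Rightarrow> bool" where
  "condorcet_loser n d j \<longleftrightarrow> j \<in> {1..n} \<and> (\<forall>k\<in>{1..n}. k \<noteq> j \<longrightarrow> d j k < 0)"

definition strongly_transitive :: "nat \<Rightarrow> (nat \<Rightarrow> nat \<Rightarrow> real) set" where
  "strongly_transitive n = {s. pair_vec n s \<and>
     (\<forall>i\<in>{1..n}. \<forall>j\<in>{1..n}. \<forall>k\<in>{1..n}. s i j + s j k = s i k)}"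

definition is_st_projection :: "nat \<Rightarrow> (nat \<Rightarrow> nat \<Rightarrow> real) \<Rightarrow> (nat \<Rightarrow> nat \<Rightarrow> real) \<Rightarrow> bool" where
  "is_st_projection n d s \<longleftrightarrow> s \<in> strongly_transitive n \<and>
     (\<forall>t\<in>strongly_transitive n. pair_inner n (\<lambda>i j. d i j - s i j) t = 0)"

end

theory Submission
  imports Defs
begin

text \<open>Testing the orthogonality of \<open>d - d\<^sub>s\<^sub>t\<close> against the strongly transitive vectors
  \<open>p i - p j\<close> with \<open>p\<close> a unit vector shows that the projection preserves every Borda score
  \<open>\<Sum>\<^sub>k d i k\<close>. Since a strongly transitive vector is determined by its Borda scores, this gives
  \<open>n \<cdot> d\<^sub>s\<^sub>t 1 n = \<Sum>\<^sub>k (d 1 k - d n k)\<close>, and every summand is positive because \<open>A\<^sub>1\<close> beats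
  every other alternative and \<open>A\<^sub>n\<close> loses to every other alternative.\<close>

definition borda_score :: "nat \<Rightarrow> (nat \<Rightarrow> nat \<Rightarrow> real) \<Rightarrow> nat \<Rightarrow> real" where
  "borda_score n d i = (\<Sum>k\<in>{1..n}. d i k)"

lemma pair_vec_diag_zero:
  assumes "pair_vec n d" and "i \<in> {1..n}"
  shows "d i i = 0"
proof -
  have "d i i = - d i i"
    using assms unfolding pair_vec_def by blast
  then show ?thesis
    by simp
qed

lemma sum_upper_pairs_symmetrize:
  fixes A :: "'a::linorder set" and g :: "'a \<Rightarrow> 'a \<Rightarrow> 'b::comm_monoid_add"
  assumes "finite A"
  shows "(\<Sum>i\<in>A. \<Sum>j\<in>{j\<in>A. i < j}. g i j + g j i) = (\<Sum>i\<in>A. \<Sum>j\<in>A - {i}. g i j)"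
proof -
  have "(\<Sum>j\<in>A - {i}. g i j) = (\<Sum>j\<in>{j\<in>A. i < j}. g i j) + (\<Sum>j\<in>{j\<in>A. j < i}. g i j)" for i
  proof -
    have "A - {i} = {j\<in>A. i < j} \<union> {j\<in>A. j < i}"
      by auto
    moreover have "(\<Sum>j\<in>{j\<in>A. i < j} \<union> {j\<in>A. j < i}. g i j) = (\<Sum>j\<in>{j\<in>A. i < j}. g i j) + (\<Sum>j\<in>{j\<in>A. j < i}. g i j)"
      using assms by (intro sum.union_disjoint) auto
    ultimately show ?thesis
      by simp
  qed
  then have "(\<Sum>i\<in>A. \<Sum>j\<in>A - {i}. g i j)
      = (\<Sum>i\<in>A. \<Sum>j\<in>{j\<in>A. i < j}. g i j) + (\<Sum>i\<in>A. \<Sum>j\<in>{j\<in>A. j < i}. g i j)"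
    using assms by (simp add: sum.distrib)
  also have "(\<Sum>i\<in>A. \<Sum>j\<in>{j\<in>A. j < i}. g i j) = (\<Sum>j\<in>A. \<Sum>i\<in>{i\<in>A. j < i}. g i j)"
    by (rule sum.swap_restrict[OF assms assms])
  finally show ?thesis
    by (simp add: sum.distrib)
qed

lemma pair_inner_potential:
  assumes "pair_vec n r"
  shows "pair_inner n r (\<lambda>i j. p i - p j) = (\<Sum>i\<in>{1..n}. p i * borda_score n r i)"
proof -
  let ?I = "{1..n}"
  have upper: "{i<..n} = {j\<in>?I. i < j}" if "i \<in> ?I" for i
    using that by auto
  have "r i j * (p i - p j) = r i j * p i + r j i * p j" if "i \<in> ?I" "j \<in> ?I" for i j
  proof -
    have "r j i = - r i j"
      using assms that unfolding pair_vec_def by blast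
    then show ?thesis
      by (simp add: algebra_simps)
  qed
  then have "pair_inner n r (\<lambda>i j. p i - p j)
      = (\<Sum>i\<in>?I. \<Sum>j\<in>{j\<in>?I. i < j}. r i j * p i + r j i * p j)"
    unfolding pair_inner_def by (intro sum.cong) (auto simp: upper)
  also have "\<dots> = (\<Sum>i\<in>?I. \<Sum>j\<in>?I - {i}. r i j * p i)"
    by (rule sum_upper_pairs_symmetrize) simp
  also have "\<dots> = (\<Sum>i\<in>?I. p i * borda_score n r i)"
  proof (rule sum.cong[OF refl])
    fix i
    assume "i \<in> ?I"
    then have "(\<Sum>j\<in>?I - {i}. r i j) = borda_score n r i"
      unfolding borda_score_def by (simp add: sum_diff1 pair_vec_diag_zero[OF assms])
    then show "(\<Sum>j\<in>?I - {i}. r i j * p i) = p i * borda_score n r i"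
      by (metis sum_distrib_right mult.commute)
  qed
  finally show ?thesis .
qed

lemma potential_strongly_transitive:
  "(\<lambda>i j. p i - p j) \<in> strongly_transitive n"
  unfolding strongly_transitive_def pair_vec_def by auto

lemma borda_score_st_projection:
  assumes "pair_vec n d" and "is_st_projection n d s" and "i \<in> {1..n}"
  shows "borda_score n s i = borda_score n d i"
proof -
  let ?r = "\<lambda>i j. d i j - s i j"
  have "pair_vec n s" and orth: "\<forall>t\<in>strongly_transitive n. pair_inner n ?r t = 0"
    using assms(2) unfolding is_st_projection_def strongly_transitive_def by auto
  with assms(1) have "pair_vec n ?r"
    unfolding pair_vec_def by (metis minus_diff_eq minus_diff_minus)
  then have "0 = (\<Sum>k\<in>{1..n}. of_bool (k = i) * borda_score n ?r k)"
    using orth potential_strongly_transitive by (metis pair_inner_potential)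
  also have "\<dots> = borda_score n d i - borda_score n s i"
    using assms(3) by (simp add: borda_score_def sum_subtractf)
  finally show ?thesis
    by simp
qed

lemma strongly_transitive_eq_borda:
  assumes "s \<in> strongly_transitive n" and "i \<in> {1..n}" and "j \<in> {1..n}"
  shows "real n * s i j = borda_score n s i - borda_score n s j"
proof -
  have "s i k - s j k = s i j" if "k \<in> {1..n}" for k
    using assms that unfolding strongly_transitive_def by force
  then show ?thesis
    unfolding borda_score_def sum_subtractf[symmetric] by simp
qed

lemma st_projection_eq_borda:
  assumes "pair_vec n d" and "is_st_projection n d s" and "i \<in> {1..n}" and "j \<in> {1..n}"
  shows "real n * s i j = borda_score n d i - borda_score n d j"
proof -
  have "s \<in> strongly_transitive n"
    using assms(2) unfolding is_st_projection_def by blast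
  then show ?thesis
    using assms by (simp add: strongly_transitive_eq_borda borda_score_st_projection)
qed

lemma borda_winner_minus_loser_pos:
  assumes "pair_vec n d" and "condorcet_winner n d w" and "condorcet_loser n d l" and "w \<noteq> l"
  shows "borda_score n d w - borda_score n d l > 0"
proof -
  have w: "w \<in> {1..n}"
    using assms(2) unfolding condorcet_winner_def by auto
  have "d w k - d l k > 0" if k: "k \<in> {1..n}" for k
  proof -
    have "d w k \<ge> 0" "d l k \<le> 0"
      using assms(2,3) pair_vec_diag_zero[OF assms(1)] k
      unfolding condorcet_winner_def condorcet_loser_def by (metis less_eq_real_def)+
    moreover have "d w k > 0 \<or> d l k < 0"
      using assms(2-4) k unfolding condorcet_winner_def condorcet_loser_def by metis
    ultimately show ?thesis
      by linarith
  qed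
  then show ?thesis
    using w unfolding borda_score_def sum_subtractf[symmetric] by (intro sum_pos) auto
qed

theorem theorem3:
  fixes n :: nat and d dst :: "nat \<Rightarrow> nat \<Rightarrow> real"
  assumes "n \<ge> 3"
    and "pair_vec n d"
    and "condorcet_winner n d 1" and "\<forall>j. condorcet_winner n d j \<longrightarrow> j = 1"
    and "condorcet_loser n d n" and "\<forall>j. condorcet_loser n d j \<longrightarrow> j = n"
    and "is_st_projection n d dst"
  shows "dst 1 n > 0"
proof -
  have "real n * dst 1 n = borda_score n d 1 - borda_score n d n"
    using assms(1) by (intro st_projection_eq_borda[OF assms(2,7)]) auto
  also have "\<dots> > 0"
    using assms(1) by (intro borda_winner_minus_loser_pos[OF assms(2,3,5)]) auto
  finally show ?thesis
    by (simp add: zero_less_mult_iff)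
qed

end
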